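(* Let $0\le k_1\le k_2$ be integers and $m$ a positive integer, and suppose there exists a perfect $B[-k_1,k_2](m)$ set. Suppose also that $p$ is a prime and $a>0$ an integer with $p\mid m$ and $a\mid p-1$. Let $r$ be a positive integer with $\gcd(a(k_1+k_2),r)=1$ and $p\mid a(k_1+k_2)+r$. If $r\le a$ and $\lfloor k_1/p\rfloor+\lfloor k_2/p\rfloor=\lfloor (k_1+k_2)/p\rfloor$, then $a(k_1+k_2)+r \mid m$.
   Context: For a positive integer $q$, $\mathbb{Z}_q$ is the ring of integers modulo $q$. For integers $a\le b$, $[a,b]^\ast=\{a,a+1,\dots,b\}\setminus\{0\}$. For non-negative integers $0\le k_1\le k_2$ and a positive integer $q$, a set $B\subseteq\mathbb{Z}_q$ is a $B[-k_1,k_2](q)$ set (splitter set) if, for each $b\in B$, the set $\{ab \bmod q: a\in[-k_1,k_2]^\ast\}$ consists of $k_1+k_2$ distinct nonzero elements, and these sets are pairwise disjoint for distinct $b\in B$. Such a set is perfect if $|B|=(q-1)/(k_1+k_2)$; equivalently, every nonzero element of $\mathbb{Z}_q$ has a unique representation $ab$ with $a\in[-k_1,k_2]^\ast$, $b\in B$ (and $0$ has no such representation). *)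

theory Defs
  imports Complex_Main "HOL-Computational_Algebra.Primes"
begin

text \<open>Elements of Z_q are represented by integers in {0..<q}.
  The multiplier set [a,b]* = {a..b} minus {0}.\<close>

definition mult_range :: "int \<Rightarrow> int \<Rightarrow> int set" where
  "mult_range a b = {a..b} - {0}"

definition splitter_orbit :: "int \<Rightarrow> int \<Rightarrow> int \<Rightarrow> int \<Rightarrow> int set" where
  "splitter_orbit k1 k2 q b = (\<lambda>a. (a * b) mod q) ` mult_range (-k1) k2"

definition splitter_set :: "int \<Rightarrow> int \<Rightarrow> int \<Rightarrow> int set \<Rightarrow> bool" where
  "splitter_set k1 k2 q B \<longleftrightarrow>
     B \<subseteq> {0..<q} \<and>
     (\<forall>b\<in>B. inj_on (\<lambda>a. (a * b) mod q) (mult_range (-k1) k2) \<and>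
             0 \<notin> splitter_orbit k1 k2 q b) \<and>
     (\<forall>b\<in>B. \<forall>b'\<in>B. b \<noteq> b' \<longrightarrow> splitter_orbit k1 k2 q b \<inter> splitter_orbit k1 k2 q b' = {})"

definition perfect_splitter_set :: "int \<Rightarrow> int \<Rightarrow> int \<Rightarrow> int set \<Rightarrow> bool" where
  "perfect_splitter_set k1 k2 q B \<longleftrightarrow>
     splitter_set k1 k2 q B \<and> of_nat (card B) = (of_int (q - 1) / of_int (k1 + k2) :: real)"

end

theory Submission
  imports Defs
begin

(*
  A perfect splitter set B makes (x, b) \<mapsto> x b mod m a bijection from [-k1,k2]* \<times> B onto
  the nonzero residues, so k N = m - 1 with k = k1 + k2 and N = |B|. Since p divides x b iff it
  divides x or b, counting the nonzero multiples of p through the same bijection gives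
  k t + c (N - t) = m/p - 1, where t counts the multiples of p in B and c = \<lfloor>k1/p\<rfloor> + \<lfloor>k2/p\<rfloor>
  those in [-k1,k2]*; the floor hypothesis says c = \<lfloor>k/p\<rfloor>. Eliminating N yields
  (k mod p) m = ((p - 1) k + k mod p)(k t + 1). Writing p - 1 = a e, the conditions
  p | a k + r and 0 < r \<le> a pin down k mod p = e r, so after cancelling e we get
  r m = (a k + r)(k t + 1), and a k + r is coprime to r.
*)

lemma mult_le_iff_le_div_int:
  fixes j k p :: int
  assumes "0 < p"
  shows "p * j \<le> k \<longleftrightarrow> j \<le> k div p"
proof
  assume "p * j \<le> k"
  then have "p * j div p \<le> k div p" using assms by (intro zdiv_mono1) auto
  then show "j \<le> k div p" using assms by simp
next
  assume "j \<le> k div p"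
  then have "p * j \<le> p * (k div p)" using assms by simp
  also have "\<dots> \<le> k" using mult_div_mod_eq[of p k] pos_mod_sign[OF assms, of k] by linarith
  finally show "p * j \<le> k" .
qed

lemma div_diff_one_of_dvd:
  fixes p q :: int
  assumes "0 < p" "p dvd q"
  shows "(q - 1) div p = q div p - 1"
proof -
  obtain t where t: "q = p * t" using assms(2) ..
  have "(q - 1) div p = ((p - 1) + (t - 1) * p) div p"
    unfolding t by (simp add: algebra_simps)
  also have "\<dots> = t - 1"
    using assms(1) by (simp add: div_pos_pos_trivial)
  finally show ?thesis using t assms(1) by simp
qed

lemma mod_eq_mult_if_dvd_mult_add:
  fixes a e k p r :: int
  assumes "0 < p" "0 < a" "a * e = p - 1" "p dvd a * k + r" "0 \<le> r" "r \<le> a"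
  shows "k mod p = e * r"
proof -
  have "0 \<le> a * e"
    using assms(1,3) by simp
  then have "0 \<le> e"
    using assms(2) by (simp add: zero_le_mult_iff)
  have "coprime p a"
    using assms(3) by (metis coprime_commute coprime_mult_left_iff coprime_diff_one_left)
  have "p * r = a * e * r + r"
    using assms(3) by (metis diff_add_cancel distrib_right mult_1)
  then have "a * (k - e * r) = a * k + r - p * r"
    by (simp add: algebra_simps)
  also have "p dvd \<dots>"
    using assms(4) by (rule dvd_diff) simp
  finally have "p dvd k - e * r"
    using \<open>coprime p a\<close> by (simp add: coprime_dvd_mult_right_iff)
  then have "k mod p = e * r mod p"
    by (simp add: mod_eq_dvd_iff)
  also have "\<dots> = e * r"
    using assms \<open>0 \<le> e\<close> mult_left_mono[of r a e] by (simp add: mult.commute)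
  finally show ?thesis .
qed

lemma card_Collect_bij_betw:
  assumes "bij_betw f X Y"
  shows "card {x \<in> X. P (f x)} = card {y \<in> Y. P y}"
proof -
  have "bij_betw f {x \<in> X. P (f x)} {y \<in> Y. P y}"
    using assms unfolding bij_betw_def by (auto intro: inj_on_subset)
  then show ?thesis by (rule bij_betw_same_card)
qed

lemma card_mult_range:
  fixes k1 k2 :: int
  assumes "0 \<le> k1" "0 \<le> k2"
  shows "card (mult_range (-k1) k2) = nat (k1 + k2)"
  using assms by (simp add: mult_range_def card_Diff_singleton)

lemma mult_range_0_eq: "mult_range 0 (q - 1) = {1..<q}"
  by (auto simp: mult_range_def)

lemma multiples_in_mult_range:
  fixes k1 k2 p :: int
  assumes "0 < p"
  shows "{x \<in> mult_range (-k1) k2. p dvd x} = (*) p ` mult_range (-(k1 div p)) (k2 div p)"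
proof -
  have "p * j \<in> mult_range (-k1) k2 \<longleftrightarrow> j \<in> mult_range (-(k1 div p)) (k2 div p)" for j
    using assms mult_le_iff_le_div_int[OF assms, of j k2] mult_le_iff_le_div_int[OF assms, of "-j" k1]
    by (auto simp: mult_range_def)
  then show ?thesis by (auto elim!: dvdE)
qed

lemma card_multiples_in_mult_range:
  fixes k1 k2 p :: int
  assumes "0 \<le> k1" "0 \<le> k2" "0 < p"
  shows "card {x \<in> mult_range (-k1) k2. p dvd x} = nat (k1 div p + k2 div p)"
proof -
  have "inj_on ((*) p) (mult_range (-(k1 div p)) (k2 div p))"
    using assms by (auto intro: inj_onI)
  then have "card {x \<in> mult_range (-k1) k2. p dvd x} = card (mult_range (-(k1 div p)) (k2 div p))"
    by (simp add: multiples_in_mult_range[OF assms(3)] card_image)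
  also have "\<dots> = nat (k1 div p + k2 div p)"
    using assms by (simp add: card_mult_range pos_imp_zdiv_nonneg_iff)
  finally show ?thesis .
qed

lemma perfect_splitter_set_finite:
  assumes "perfect_splitter_set k1 k2 q B"
  shows "finite B"
  using assms by (auto simp: perfect_splitter_set_def splitter_set_def intro: finite_subset)

lemma perfect_splitter_set_card:
  assumes "perfect_splitter_set k1 k2 q B" "0 < k1 + k2"
  shows "(k1 + k2) * int (card B) = q - 1"
proof -
  have "real_of_int ((k1 + k2) * int (card B)) = real_of_int (q - 1)"
    using assms by (simp add: perfect_splitter_set_def)
  then show ?thesis by linarith
qed

lemma perfect_splitter_set_modulus_pos:
  assumes "perfect_splitter_set k1 k2 q B" "0 < k1 + k2"
  shows "0 < q"
proof -
  have "0 \<le> (k1 + k2) * int (card B)"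
    using assms(2) by simp
  then show ?thesis
    using perfect_splitter_set_card[OF assms] by linarith
qed

lemma perfect_splitter_set_bij_betw:
  assumes "perfect_splitter_set k1 k2 q B" "0 \<le> k1" "0 \<le> k2" "0 < k1 + k2"
  shows "bij_betw (\<lambda>(x, b). x * b mod q) (mult_range (-k1) k2 \<times> B) {1..<q}"
proof -
  let ?A = "mult_range (-k1) k2" and ?f = "\<lambda>(x, b). x * b mod q"
  have splitter: "splitter_set k1 k2 q B"
    using assms(1) by (simp add: perfect_splitter_set_def)
  have "0 < q"
    using assms(1,4) by (rule perfect_splitter_set_modulus_pos)
  have "finite B"
    using assms(1) by (rule perfect_splitter_set_finite)
  have inj: "inj_on ?f (?A \<times> B)"
  proof (rule inj_onI, clarsimp)
    fix x b y c
    assume x: "x \<in> ?A" and b: "b \<in> B" and y: "y \<in> ?A" and c: "c \<in> B"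
      and eq: "x * b mod q = y * c mod q"
    have "b = c"
    proof (rule ccontr)
      assume "b \<noteq> c"
      moreover have "x * b mod q \<in> splitter_orbit k1 k2 q b"
        using x by (simp add: splitter_orbit_def)
      moreover have "x * b mod q \<in> splitter_orbit k1 k2 q c"
        unfolding eq using y by (simp add: splitter_orbit_def)
      ultimately show False
        using splitter b c unfolding splitter_set_def by blast
    qed
    moreover from this have "x = y"
      using splitter b x y eq unfolding splitter_set_def by (auto dest: inj_onD)
    ultimately show "x = y \<and> b = c" by simp
  qed
  have "x * b mod q \<in> {1..<q}" if "x \<in> ?A" "b \<in> B" for x b
  proof -
    have "x * b mod q \<in> splitter_orbit k1 k2 q b"
      using that(1) by (simp add: splitter_orbit_def)
    moreover have "0 \<notin> splitter_orbit k1 k2 q b"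
      using splitter that(2) unfolding splitter_set_def by blast
    ultimately have "x * b mod q \<noteq> 0"
      by metis
    moreover have "0 \<le> x * b mod q" "x * b mod q < q"
      using \<open>0 < q\<close> by simp_all
    ultimately show ?thesis by simp
  qed
  then have "?f ` (?A \<times> B) \<subseteq> {1..<q}"
    by auto
  moreover have "int (card (?A \<times> B)) = int (card {1..<q})"
    using perfect_splitter_set_card[OF assms(1,4)] assms(2,3) \<open>0 < q\<close>
    by (simp add: card_cartesian_product card_mult_range)
  then have "card (?A \<times> B) = card {1..<q}"
    by (simp only: of_nat_eq_iff)
  ultimately have "?f ` (?A \<times> B) = {1..<q}"
    using \<open>finite B\<close> inj by (simp add: card_image card_subset_eq)
  with inj show ?thesis by (rule bij_betw_imageI)
qed

lemma perfect_splitter_set_count_multiples: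
  fixes k1 k2 q p :: int
  assumes "perfect_splitter_set k1 k2 q B" "0 \<le> k1" "0 \<le> k2" "0 < k1 + k2"
    and "prime p" "p dvd q"
  shows "(k1 + k2) * int (card {b \<in> B. p dvd b})
           + (k1 div p + k2 div p) * int (card {b \<in> B. \<not> p dvd b}) = q div p - 1"
proof -
  let ?A = "mult_range (-k1) k2" and ?f = "\<lambda>(x, b). x * b mod q"
  have bij: "bij_betw ?f (?A \<times> B) {1..<q}"
    using assms(1-4) by (rule perfect_splitter_set_bij_betw)
  have "0 < p"
    using assms(5) by (rule prime_gt_0_int)
  have "0 < q"
    using assms(1,4) by (rule perfect_splitter_set_modulus_pos)
  have "finite B"
    using assms(1) by (rule perfect_splitter_set_finite)
  have "finite ?A"
    by (simp add: mult_range_def)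
  have multiples_split: "{u \<in> ?A \<times> B. p dvd ?f u}
          = ?A \<times> {b \<in> B. p dvd b} \<union> {x \<in> ?A. p dvd x} \<times> {b \<in> B. \<not> p dvd b}"
    using assms(5,6) by (auto simp: dvd_mod_iff prime_dvd_mult_iff)
  have "0 < q div p"
    using \<open>0 < p\<close> \<open>0 < q\<close> assms(6) by (simp add: pos_imp_zdiv_pos_iff zdvd_imp_le)
  have "card ?A * card {b \<in> B. p dvd b} + card {x \<in> ?A. p dvd x} * card {b \<in> B. \<not> p dvd b}
      = card {u \<in> ?A \<times> B. p dvd ?f u}"
    unfolding multiples_split using \<open>finite ?A\<close> \<open>finite B\<close>
    by (subst card_Un_disjoint) (auto simp: card_cartesian_product)
  also have "\<dots> = card {y \<in> mult_range 0 (q - 1). p dvd y}"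
    unfolding mult_range_0_eq using bij by (rule card_Collect_bij_betw)
  also have "\<dots> = nat (q div p - 1)"
    using card_multiples_in_mult_range[of 0 "q - 1" p] \<open>0 < p\<close> \<open>0 < q\<close> assms(6)
    by (simp add: div_diff_one_of_dvd)
  finally have "int (card ?A * card {b \<in> B. p dvd b}
                 + card {x \<in> ?A. p dvd x} * card {b \<in> B. \<not> p dvd b}) = q div p - 1"
    using \<open>0 < q div p\<close> by simp
  then show ?thesis
    using assms(2,3) \<open>0 < p\<close>
    by (simp add: card_mult_range card_multiples_in_mult_range pos_imp_zdiv_nonneg_iff)
qed

lemma perfect_splitter_set_mod_prime_identity:
  fixes k1 k2 q p :: int
  assumes "perfect_splitter_set k1 k2 q B" "0 \<le> k1" "0 \<le> k2" "0 < k1 + k2"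
    and "prime p" "p dvd q" "k1 div p + k2 div p = (k1 + k2) div p"
  shows "\<exists>t. (k1 + k2) mod p * q = ((p - 1) * (k1 + k2) + (k1 + k2) mod p) * ((k1 + k2) * t + 1)"
proof -
  define k where "k = k1 + k2"
  define N where "N = int (card B)"
  define t where "t = int (card {b \<in> B. p dvd b})"
  have "finite B"
    using assms(1) by (rule perfect_splitter_set_finite)
  then have "card B = card {b \<in> B. p dvd b} + card {b \<in> B. \<not> p dvd b}"
    by (subst card_Un_disjoint [symmetric]) (auto intro: arg_cong [where f = card])
  then have "int (card {b \<in> B. \<not> p dvd b}) = N - t"
    unfolding N_def t_def by simp
  then have multiples: "k * t + (k div p) * (N - t) = q div p - 1"
    using perfect_splitter_set_count_multiples[OF assms(1-6)] assms(7) unfolding k_def t_def by simp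
  have total: "k * N = q - 1"
    using perfect_splitter_set_card[OF assms(1,4)] unfolding k_def N_def .
  define c where "c = k div p"
  define \<rho> where "\<rho> = k mod p"
  have "k = p * c + \<rho>"
    unfolding c_def \<rho>_def by simp
  have "p * (k * t + c * (N - t)) = p * (q div p) - p"
    unfolding c_def multiples by (simp add: algebra_simps)
  also have "p * (q div p) = q"
    using assms(6) by simp
  finally have "p * (k * t + c * (N - t)) = q - p" .
  with total \<open>k = p * c + \<rho>\<close> have "\<rho> * q = ((p - 1) * k + \<rho>) * (k * t + 1)"
    by algebra
  then show ?thesis unfolding k_def \<rho>_def by blast
qed

theorem lemma3p4:
  fixes k1 k2 m p a r :: int
  assumes "0 \<le> k1" and "k1 \<le> k2" and "0 < m"
    and "\<exists>B. perfect_splitter_set k1 k2 m B"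
    and "prime p" and "0 < a" and "p dvd m" and "a dvd p - 1"
    and "0 < r" and "gcd (a * (k1 + k2)) r = 1" and "p dvd a * (k1 + k2) + r"
    and "r \<le> a"
    and "k1 div p + k2 div p = (k1 + k2) div p"
  shows "a * (k1 + k2) + r dvd m"
proof -
  define k where "k = k1 + k2"
  have "p > 1"
    using assms(5) by (rule prime_gt_1_int)
  have "k \<noteq> 0"
  proof
    assume "k = 0"
    then have "r = 1"
      using assms(9,10) unfolding k_def by simp
    then have "p dvd 1"
      using assms(11) \<open>k = 0\<close> unfolding k_def by simp
    with \<open>p > 1\<close> show False by simp
  qed
  then have "0 < k"
    using assms(1,2) unfolding k_def by simp
  obtain B where "perfect_splitter_set k1 k2 m B"
    using assms(4) ..
  then obtain t where identity: "k mod p * m = ((p - 1) * k + k mod p) * (k * t + 1)"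
    using perfect_splitter_set_mod_prime_identity assms(1,2,5,7,13) \<open>0 < k\<close>
    unfolding k_def by fastforce
  obtain e where e: "p - 1 = a * e"
    using assms(8) ..
  have "k mod p = e * r"
    using mod_eq_mult_if_dvd_mult_add[of p a e k r] \<open>p > 1\<close> assms(6,9,11,12) e
    unfolding k_def by simp
  with identity e have "e * (r * m) = e * ((a * k + r) * (k * t + 1))"
    by algebra
  moreover have "e \<noteq> 0"
    using e \<open>p > 1\<close> by auto
  ultimately have "r * m = (a * k + r) * (k * t + 1)"
    by simp
  moreover have "coprime (a * k + r) r"
    using assms(10) unfolding k_def by (simp add: coprime_iff_gcd_eq_1 gcd_add1)
  ultimately show ?thesis
    unfolding k_def by (metis coprime_dvd_mult_right_iff dvd_triv_left)
qed

end
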